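(* Let $1\le k\le n-1$, let $I,J$ be tightly $r$-interlacing $k$-subsets of $\{1,\dots,n\}$, write $I\setminus J=\{i_1,\dots,i_r\}$ and $J\setminus I=\{j_1,\dots,j_r\}$ with $1\le i_1<j_1<i_2<j_2<\dots<i_r<j_r\le n$, and let $b_1,\dots,b_{2r}\in\mathbb{C}[[t]]$ satisfy $\sum_{l=1}^{2r}b_l=0$. Then the module $\mathbb{M}(I,J)$ (defined in the context) is a maximal Cohen–Macaulay $B_{k,n}$-module, i.e.\ it lies in $\mathrm{CM}(B_{k,n})$.
   Context: Let $\Gamma_n$ be the quiver with vertices $1,\dots,n$ arranged on a cycle (vertex $0$ is identified with vertex $n$) and arrows $x_i\colon i-1\to i$, $y_i\colon i\to i-1$ for $i=1,\dots,n$. The algebra $B_{k,n}$ is the completed path algebra of $\Gamma_n$ modulo the closure of the ideal generated by the relations $xy=yx$ and $x^k=y^{n-k}$ at every vertex. Its centre is $Z=\mathbb{C}[[t]]$ with $t=\sum_i x_iy_i$. $\mathrm{CM}(B_{k,n})$ denotes the category of (maximal) Cohen–Macaulay $B_{k,n}$-modules, which are exactly the $B_{k,n}$-modules that are free of finite rank over $Z$; such a module is a representation of $\Gamma_n$ with a free $Z$-module of the same rank at each vertex. Two $k$-subsets $I,J$ of $\{1,\dots,n\}$ are $r$-interlacing if there are $\{i_1,i_3,\dots,i_{2r-1}\}\subset I\setminus J$ and $\{i_2,i_4,\dots,i_{2r}\}\subset J\setminus I$ with $i_1<i_2<\dots<i_{2r}<i_1$ cyclically, and no larger subsets with this property; they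 are tightly $r$-interlacing if moreover $|I\cap J|=k-r$. The module $\mathbb{M}(I,J)$: at each vertex put $V_i=\mathbb{C}[[t]]\oplus\mathbb{C}[[t]]$; for $l=1,\dots,r$ set $x_{i_l}=\begin{pmatrix}t&b_{2l-1}\\0&1\end{pmatrix}$, $y_{i_l}=\begin{pmatrix}1&-b_{2l-1}\\0&t\end{pmatrix}$, $x_{j_l}=\begin{pmatrix}1&b_{2l}\\0&t\end{pmatrix}$, $y_{j_l}=\begin{pmatrix}t&-b_{2l}\\0&1\end{pmatrix}$; for $i\notin I\cup J$ set $x_i=tE$, $y_i=E$; for $i\in I\cap J$ set $x_i=E$, $y_i=tE$, where $E$ is the $2\times2$ identity matrix. *)

theory Defs
  imports "HOL-Analysis.Analysis" "HOL-Computational_Algebra.Formal_Power_Series"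
begin

text \<open>Vertices of the cyclic quiver Gamma_n are 1..n; vertex 0 is identified with n.
  cyc n m is the representative in 1..n of m modulo n.\<close>
definition cyc :: "nat \<Rightarrow> nat \<Rightarrow> nat" where
  "cyc n m = (if m mod n = 0 then n else m mod n)"

text \<open>A representation of Gamma_n by free C[[t]]-modules of rank CARD('m) at every vertex:
  X i is the matrix of x_i : V_(i-1) -> V_i, Y i the matrix of y_i : V_i -> V_(i-1)
  (matrices act on column vectors).\<close>
type_synonym 'm zmat = "complex fps ^'m^'m"

fun xpath :: "nat \<Rightarrow> (nat \<Rightarrow> 'm::finite zmat) \<Rightarrow> nat \<Rightarrow> nat \<Rightarrow> 'm zmat" where
  "xpath n X i 0 = mat 1"
| "xpath n X i (Suc m) = X (cyc n (i + Suc m)) ** xpath n X i m"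

fun ypath :: "nat \<Rightarrow> (nat \<Rightarrow> 'm::finite zmat) \<Rightarrow> nat \<Rightarrow> nat \<Rightarrow> 'm zmat" where
  "ypath n Y i 0 = mat 1"
| "ypath n Y i (Suc m) = Y (cyc n (i + n - m mod n)) ** ypath n Y i m"

text \<open>Cohen--Macaulay B_{k,n}-modules, described as in the paper as representations of Gamma_n
  with a free Z = C[[t]]-module of the same rank at each vertex, satisfying the relations
  xy = yx and x^k = y^(n-k) at every vertex, and on which the central element
  t = sum x_i y_i acts as multiplication by the variable t of C[[t]].\<close>
definition CM_rep :: "nat \<Rightarrow> nat \<Rightarrow> (nat \<Rightarrow> 'm::finite zmat) \<Rightarrow> (nat \<Rightarrow> 'm zmat) \<Rightarrow> bool" where
  "CM_rep k n X Y \<longleftrightarrow>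
     (\<forall>i\<in>{1..n}. X i ** Y i = Y (cyc n (i+1)) ** X (cyc n (i+1)))
   \<and> (\<forall>i\<in>{1..n}. X i ** Y i = mat fps_X)
   \<and> (\<forall>i\<in>{1..n}. xpath n X i k = ypath n Y i (n - k))"

definition cyclically_ordered :: "nat \<Rightarrow> (nat \<Rightarrow> nat) \<Rightarrow> bool" where
  "cyclically_ordered m a \<longleftrightarrow> m = 0 \<or>
     (\<exists>s<m. \<forall>p q. p < q \<and> q < m \<longrightarrow> a (1 + (p + s) mod m) < a (1 + (q + s) mod m))"

definition interlace_witness :: "nat set \<Rightarrow> nat set \<Rightarrow> nat \<Rightarrow> bool" where
  "interlace_witness I J r \<longleftrightarrow> (\<exists>a :: nat \<Rightarrow> nat.
     (\<forall>l\<in>{1..r}. a (2*l - 1) \<in> I - J \<and> a (2*l) \<in> J - I) \<and> cyclically_ordered (2*r) a)"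

definition r_interlacing :: "nat \<Rightarrow> nat set \<Rightarrow> nat set \<Rightarrow> bool" where
  "r_interlacing r I J \<longleftrightarrow> interlace_witness I J r \<and> \<not> interlace_witness I J (Suc r)"

definition tightly_r_interlacing :: "nat \<Rightarrow> nat \<Rightarrow> nat set \<Rightarrow> nat set \<Rightarrow> bool" where
  "tightly_r_interlacing k r I J \<longleftrightarrow> r_interlacing r I J \<and> card (I \<inter> J) = k - r"

definition mat2 :: "'a::zero \<Rightarrow> 'a \<Rightarrow> 'a \<Rightarrow> 'a \<Rightarrow> 'a^2^2" where
  "mat2 a b c d = (\<chi> p q. if p = 1 then (if q = 1 then a else b) else (if q = 1 then c else d))"

abbreviation tE :: "2 zmat" where "tE \<equiv> mat fps_X"
abbreviation E :: "2 zmat" where "E \<equiv> mat 1"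

text \<open>The module M(I,J): iv l = i_l, jv l = j_l (l = 1..r), b l = b_l.\<close>
definition MX :: "nat set \<Rightarrow> nat set \<Rightarrow> nat \<Rightarrow> (nat \<Rightarrow> nat) \<Rightarrow> (nat \<Rightarrow> nat)
     \<Rightarrow> (nat \<Rightarrow> complex fps) \<Rightarrow> nat \<Rightarrow> 2 zmat" where
  "MX I J r iv jv b v =
    (if \<exists>l\<in>{1..r}. v = iv l then
       (let l = (THE l. l \<in> {1..r} \<and> v = iv l) in mat2 fps_X (b (2*l-1)) 0 1)
     else if \<exists>l\<in>{1..r}. v = jv l then
       (let l = (THE l. l \<in> {1..r} \<and> v = jv l) in mat2 1 (b (2*l)) 0 fps_X)
     else if v \<in> I \<inter> J then E
     else tE)"

definition MY :: "nat set \<Rightarrow> nat set \<Rightarrow> nat \<Rightarrow> (nat \<Rightarrow> nat) \<Rightarrow> (nat \<Rightarrow> nat)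
     \<Rightarrow> (nat \<Rightarrow> complex fps) \<Rightarrow> nat \<Rightarrow> 2 zmat" where
  "MY I J r iv jv b v =
    (if \<exists>l\<in>{1..r}. v = iv l then
       (let l = (THE l. l \<in> {1..r} \<and> v = iv l) in mat2 1 (- b (2*l-1)) 0 fps_X)
     else if \<exists>l\<in>{1..r}. v = jv l then
       (let l = (THE l. l \<in> {1..r} \<and> v = jv l) in mat2 fps_X (- b (2*l)) 0 1)
     else if v \<in> I \<inter> J then tE
     else E)"

end

theory Submission
  imports Defs
begin

(* Every x_v y_v and y_v x_v is t times the identity, so only x^k = y^(n-k) needs an argument.
   As t is not a zero divisor, if the loop x^n is a scalar t^c at one vertex, then conjugating by
   the x_v shows that it is the same scalar at every vertex, and then t^(n-k) x^k = y^(n-k) x^(n-k) x^k = y^(n-k) t^(n-k) gives x^k = y^(n-k).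

   All x_v are upper triangular with (1,1)-entry 1 or t according as v lies in J or not, so the
   loop at vertex 0 has (1,1)-entry t^(n-k). Multiplying along the cycle, the alternation
   i_1 < j_1 < ... < i_r < j_r keeps t times the (1,2)-entry equal to the (1,1)-entry times the
   sum of the b's met so far, while the two diagonal entries differ by a factor t exactly between
   some i_l and j_l. After a full turn all b's have been met, their sum is 0, and the loop is the
   scalar t^(n-k). *)

lemma mat_mult_nth: "(mat c ** A) $ i $ j = c * (A $ i $ j :: 'a::semiring_1)"
  unfolding matrix_matrix_mult_def mat_def
  by (simp add: if_distrib[of "\<lambda>x. x * _"] cong: if_cong)

lemma mult_mat_nth: "(A ** mat c) $ i $ j = (A $ i $ j :: 'a::semiring_1) * c"
  unfolding matrix_matrix_mult_def mat_def
  by (simp add: if_distrib[of "\<lambda>x. _ * x"] cong: if_cong)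

lemma mat_mult_commute: "mat c ** A = A ** (mat c :: 'a::comm_semiring_1^'n^'n)"
  by (simp add: vec_eq_iff mat_mult_nth mult_mat_nth mult.commute)

lemma mat_mult_mat: "mat a ** mat b = (mat (a * b) :: 'a::semiring_1^'n^'n)"
  by (simp add: vec_eq_iff mat_mult_nth) (simp add: mat_def)

lemma mat_mult_left_cancel:
  fixes A B :: "'a::idom^'m^'n"
  assumes "mat c ** A = mat c ** B" and "c \<noteq> 0"
  shows "A = B"
  using assms by (simp add: vec_eq_iff mat_mult_nth)

lemma mat2_nth [simp]:
  "mat2 a b c d $ 1 $ 1 = a" "mat2 a b c d $ 1 $ 2 = b"
  "mat2 a b c d $ 2 $ 1 = c" "mat2 a b c d $ 2 $ 2 = d"
  by (simp_all add: mat2_def)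

lemma matrix_mult_nth_2:
  "((A :: 'a::semiring_1^2^2) ** B) $ i $ j = A $ i $ 1 * B $ 1 $ j + A $ i $ 2 * B $ 2 $ j"
  by (simp add: matrix_matrix_mult_def sum_2)

lemma mat2_mult: "mat2 a b c d ** mat2 a' b' c' d' =
   mat2 (a*a' + b*c') (a*b' + b*d') (c*a' + d*c') (c*b' + d*d' :: 'a::semiring_1)"
  by (simp add: vec_eq_iff forall_2 matrix_mult_nth_2)

lemma mat_eq_mat2: "(mat x :: 'a::zero^2^2) = mat2 x 0 0 x"
  by (simp add: vec_eq_iff forall_2 mat_def)

lemma strict_mono_on_atLeastAtMost_Suc:
  fixes f :: "nat \<Rightarrow> 'a::order"
  assumes "\<And>m. a \<le> m \<Longrightarrow> Suc m \<le> b \<Longrightarrow> f m < f (Suc m)"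
  shows "strict_mono_on {a..b} f"
proof (rule strict_mono_onI)
  fix x y assume "x \<in> {a..b}" "y \<in> {a..b}" "x < y"
  then show "f x < f y"
  proof (induction y)
    case (Suc y)
    then show ?case
      using assms[of y] less_trans by (cases "x = y") fastforce+
  qed simp
qed

lemma The_inj_on_eq: "inj_on f A \<Longrightarrow> x \<in> A \<Longrightarrow> (THE y. y \<in> A \<and> f x = f y) = x"
  by (rule the_equality) (auto dest: inj_onD)

lemma prod_if_mem_eq_power:
  assumes "finite A"
  shows "(\<Prod>u\<in>A. if u \<in> J then 1 else c) = (c :: 'a::comm_monoid_mult) ^ card (A - J)"
  using assms by (simp add: prod.If_cases Diff_eq)

lemma cyc_add_self: "cyc n (m + n) = cyc n m"
  by (simp add: cyc_def)

lemma cyc_eq_self: "1 \<le> u \<Longrightarrow> u \<le> n \<Longrightarrow> cyc n u = u"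
  unfolding cyc_def by (cases "u = n") auto

lemma xpath_add: "xpath n X i (a + b) = xpath n X (i + a) b ** xpath n X i a"
  by (induction b) (simp_all add: matrix_mul_assoc add.assoc)

lemma ypath_mult_xpath:
  fixes X Y :: "nat \<Rightarrow> 'm::finite zmat"
  assumes YX: "\<And>v. Y v ** X v = mat fps_X" and "m \<le> n"
  shows "ypath n Y i m ** xpath n X (i + n - m) m = mat (fps_X ^ m)"
  using \<open>m \<le> n\<close>
proof (induction m)
  case 0
  then show ?case by simp
next
  case (Suc m)
  let ?v = "cyc n (i + n - m)"
  have "xpath n X (i + n - Suc m) (1 + m) = xpath n X (i + n - m) m ** X ?v"
    using Suc.prems by (simp only: xpath_add) (simp add: Suc_diff_Suc)
  moreover have "ypath n Y i (Suc m) = Y ?v ** ypath n Y i m"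
    using Suc.prems by simp
  ultimately have "ypath n Y i (Suc m) ** xpath n X (i + n - Suc m) (Suc m)
      = Y ?v ** (ypath n Y i m ** xpath n X (i + n - m) m) ** X ?v"
    by (simp add: matrix_mul_assoc)
  also have "\<dots> = Y ?v ** (mat (fps_X ^ m) ** X ?v)"
    using Suc by (simp only: matrix_mul_assoc)
  also have "\<dots> = (Y ?v ** X ?v) ** mat (fps_X ^ m)"
    by (simp only: mat_mult_commute[of _ "X ?v"] matrix_mul_assoc)
  finally show ?case
    by (simp add: YX mat_mult_mat)
qed

lemma xpath_loop_shift:
  fixes X Y :: "nat \<Rightarrow> 'm::finite zmat"
  assumes XY: "\<And>v. X v ** Y v = mat fps_X" and loop: "xpath n X i n = mat c"
  shows "xpath n X (Suc i) n = mat c"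
proof -
  let ?v = "cyc n (Suc i)"
  have "xpath n X (Suc i) n ** X ?v = xpath n X i (1 + n)"
    by (simp only: xpath_add) simp
  also have "\<dots> = X ?v ** mat c"
    using loop cyc_add_self[of n "Suc i"] by (simp only: add.commute[of 1] xpath_add) simp
  finally have "xpath n X (Suc i) n ** (X ?v ** Y ?v) = mat c ** (X ?v ** Y ?v)"
    by (simp add: matrix_mul_assoc mat_mult_commute[of c "X ?v"])
  then have "mat fps_X ** xpath n X (Suc i) n = mat fps_X ** mat c"
    by (simp only: XY mat_mult_commute[of fps_X])
  then show ?thesis
    by (rule mat_mult_left_cancel) simp
qed

lemma xpath_loop_const:
  fixes X Y :: "nat \<Rightarrow> 'm::finite zmat"
  assumes "\<And>v. X v ** Y v = mat fps_X" and "xpath n X 0 n = mat c"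
  shows "xpath n X i n = mat c"
  using assms(2) by (induction i) (simp_all add: xpath_loop_shift[OF assms(1)])

lemma xpath_eq_ypath:
  fixes X Y :: "nat \<Rightarrow> 'm::finite zmat"
  assumes XY: "\<And>v. X v ** Y v = mat fps_X" and YX: "\<And>v. Y v ** X v = mat fps_X"
    and "k \<le> n" and loop: "xpath n X 0 n = mat (fps_X ^ (n - k))"
  shows "xpath n X i k = ypath n Y i (n - k)"
proof -
  let ?x = "xpath n X i k" and ?y = "ypath n Y i (n - k)" and ?z = "xpath n X (i + k) (n - k)"
  have yz: "?y ** ?z = mat (fps_X ^ (n - k))"
    using ypath_mult_xpath[OF YX, where m = "n - k" and n = n and i = i] \<open>k \<le> n\<close> by simp
  have zx: "?z ** ?x = mat (fps_X ^ (n - k))"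
    using xpath_add[of n X i k "n - k"] xpath_loop_const[OF XY loop, of i] \<open>k \<le> n\<close> by simp
  have "mat (fps_X ^ (n - k)) ** ?x = ?y ** (?z ** ?x)"
    by (simp add: matrix_mul_assoc yz)
  also have "\<dots> = mat (fps_X ^ (n - k)) ** ?y"
    by (simp only: zx mat_mult_commute)
  finally show ?thesis
    by (rule mat_mult_left_cancel) simp
qed

lemma xpath_upper_triangular:
  fixes X :: "nat \<Rightarrow> 2 zmat"
  assumes "\<And>v. X v $ 2 $ 1 = 0"
  shows "xpath n X i d $ 2 $ 1 = 0
    \<and> xpath n X i d $ 1 $ 1 = (\<Prod>j = 1..d. X (cyc n (i + j)) $ 1 $ 1)"
  by (induction d) (simp_all add: mat_def matrix_mult_nth_2 assms)

lemma xpath_interlaced_invariant: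
  fixes M :: "nat \<Rightarrow> 2 zmat" and s :: "nat \<Rightarrow> nat"
  assumes s_mono: "strict_mono_on {1..2*r} s" and s_range: "s ` {1..2*r} \<subseteq> {1..n}"
    and M_s: "\<And>m. m \<in> {1..2*r} \<Longrightarrow>
      M (s m) = (if odd m then mat2 fps_X (b m) 0 1 else mat2 1 (b m) 0 fps_X)"
    and M_scalar: "\<And>u. u \<notin> s ` {1..2*r} \<Longrightarrow> M u = mat (g u)"
    and "p \<le> n"
  shows "fps_X * xpath n M 0 p $ 1 $ 2 = (\<Sum>m\<in>{m \<in> {1..2*r}. s m \<le> p}. b m) * xpath n M 0 p $ 1 $ 1
    \<and> xpath n M 0 p $ 1 $ 1
      = (if odd (card {m \<in> {1..2*r}. s m \<le> p}) then fps_X else 1) * xpath n M 0 p $ 2 $ 2"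
  using \<open>p \<le> n\<close>
proof (induction p)
  case 0
  have none_passed: "{m \<in> {1..2*r}. s m \<le> 0} = {}"
    using s_range by fastforce
  show ?case
    unfolding none_passed by (simp add: mat_def)
next
  case (Suc p)
  define K where "K q = {m \<in> {1..2*r}. s m \<le> q}" for q
  define P where "P = xpath n M 0 p"
  have IH: "fps_X * P $ 1 $ 2 = (\<Sum>m\<in>K p. b m) * P $ 1 $ 1"
    "P $ 1 $ 1 = (if odd (card (K p)) then fps_X else 1) * P $ 2 $ 2"
    using Suc by (simp_all add: K_def P_def)
  have "M v $ 2 $ 1 = 0" for v
    by (cases "v \<in> s ` {1..2*r}") (auto simp: M_s M_scalar mat_def)
  then have P21: "P $ 2 $ 1 = 0"
    using xpath_upper_triangular unfolding P_def by blast
  define Q where "Q = xpath n M 0 (Suc p)"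
  have "Q = M (Suc p) ** P"
    using Suc.prems by (simp add: cyc_eq_self P_def Q_def)
  then have Q: "Q $ i $ j = M (Suc p) $ i $ 1 * P $ 1 $ j + M (Suc p) $ i $ 2 * P $ 2 $ j" for i j
    by (simp add: matrix_mult_nth_2)
  consider (special) m where "m \<in> {1..2*r}" "s m = Suc p" | (scalar) "Suc p \<notin> s ` {1..2*r}"
    by (metis imageE)
  then have "fps_X * Q $ 1 $ 2 = (\<Sum>m\<in>K (Suc p). b m) * Q $ 1 $ 1
    \<and> Q $ 1 $ 1 = (if odd (card (K (Suc p))) then fps_X else 1) * Q $ 2 $ 2"
  proof cases
    case special
    have "K p = {m' \<in> {1..2*r}. s m' < s m}"
      using special by (auto simp: K_def)
    also have "\<dots> = {1..<m}"
      using special(1) strict_mono_on_less[OF s_mono _ special(1)] by auto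
    finally have K_p: "K p = {1..<m}" .
    have "K (Suc p) = {m' \<in> {1..2*r}. s m' \<le> s m}"
      using special by (simp add: K_def)
    also have "\<dots> = {1..m}"
      using special(1) strict_mono_on_less_eq[OF s_mono _ special(1)] by auto
    finally have K_Suc_p: "K (Suc p) = {1..m}" .
    have sum_Suc: "(\<Sum>m\<in>K (Suc p). b m) = (\<Sum>m\<in>K p. b m) + b m"
      using special(1) by (simp add: K_p K_Suc_p flip: atLeastLessThanSuc_atLeastAtMost)
    have card_K: "card (K p) = m - 1" "card (K (Suc p)) = m"
      by (simp_all add: K_p K_Suc_p)
    have M_Suc_p: "M (Suc p) = (if odd m then mat2 fps_X (b m) 0 1 else mat2 1 (b m) 0 fps_X)"
      using M_s[OF special(1)] special(2) by simp
    show ?thesis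
    proof (cases "odd m")
      case True
      then have "P $ 1 $ 1 = P $ 2 $ 2"
        using IH(2) special(1) by (simp add: card_K)
      then show ?thesis
        using True IH(1) special(1)
        by (simp add: Q P21 M_Suc_p sum_Suc card_K algebra_simps)
    next
      case False
      then have "P $ 1 $ 1 = fps_X * P $ 2 $ 2"
        using IH(2) special(1) by (simp add: card_K)
      then show ?thesis
        using False IH(1) special(1)
        by (simp add: Q P21 M_Suc_p sum_Suc card_K algebra_simps)
    qed
  next
    case scalar
    then have "K (Suc p) = K p"
      by (force simp: K_def le_Suc_eq)
    then show ?thesis
      using IH M_scalar[OF scalar] by (simp add: Q P21 mat_def algebra_simps)
  qed
  then show ?case
    by (simp only: K_def Q_def)
qed

lemma xpath_interlaced_loop:
  fixes M :: "nat \<Rightarrow> 2 zmat" and s :: "nat \<Rightarrow> nat"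
  assumes s_mono: "strict_mono_on {1..2*r} s" and s_range: "s ` {1..2*r} \<subseteq> {1..n}"
    and M_s: "\<And>m. m \<in> {1..2*r} \<Longrightarrow>
      M (s m) = (if odd m then mat2 fps_X (b m) 0 1 else mat2 1 (b m) 0 fps_X)"
    and M_scalar: "\<And>u. u \<notin> s ` {1..2*r} \<Longrightarrow> M u = mat (g u)"
    and sum_b: "(\<Sum>m = 1..2*r. b m) = 0"
  shows "xpath n M 0 n = mat (\<Prod>u = 1..n. M u $ 1 $ 1)"
proof -
  let ?P = "xpath n M 0 n"
  have all_passed: "{m \<in> {1..2*r}. s m \<le> n} = {1..2*r}"
    using s_range by auto
  have "fps_X * ?P $ 1 $ 2 = 0" and P22: "?P $ 1 $ 1 = ?P $ 2 $ 2"
    using xpath_interlaced_invariant[OF s_mono s_range M_s M_scalar order_refl] sum_b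
    unfolding all_passed by simp_all
  then have P12: "?P $ 1 $ 2 = 0"
    by simp
  have "M v $ 2 $ 1 = 0" for v
    by (cases "v \<in> s ` {1..2*r}") (auto simp: M_s M_scalar mat_def)
  then have "?P $ 2 $ 1 = 0" and "?P $ 1 $ 1 = (\<Prod>u = 1..n. M (cyc n u) $ 1 $ 1)"
    using xpath_upper_triangular[of M n 0 n] by simp_all
  moreover have "(\<Prod>u = 1..n. M (cyc n u) $ 1 $ 1) = (\<Prod>u = 1..n. M u $ 1 $ 1)"
    by (rule prod.cong) (simp_all add: cyc_eq_self)
  ultimately show ?thesis
    using P12 P22 by (simp add: vec_eq_iff forall_2 mat_def)
qed

(* The sequence i_1, j_1, i_2, j_2, ..., i_r, j_r; the vertex at position m carries b_m. *)
definition interlaced :: "(nat \<Rightarrow> nat) \<Rightarrow> (nat \<Rightarrow> nat) \<Rightarrow> nat \<Rightarrow> nat" where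
  "interlaced iv jv m = (if odd m then iv ((m + 1) div 2) else jv (m div 2))"

locale interlacing =
  fixes n r :: nat and I J :: "nat set" and iv jv :: "nat \<Rightarrow> nat"
  assumes I_minus_J: "I - J = iv ` {1..r}" and J_minus_I: "J - I = jv ` {1..r}"
    and iv_less_jv: "\<forall>l\<in>{1..r}. 1 \<le> iv l \<and> iv l < jv l \<and> jv l \<le> n"
    and jv_less_iv_Suc: "\<forall>l\<in>{1..<r}. jv l < iv (Suc l)"
begin

lemma interlaced_strict_mono: "strict_mono_on {1..2*r} (interlaced iv jv)"
proof (rule strict_mono_on_atLeastAtMost_Suc)
  fix m assume "1 \<le> m" "Suc m \<le> 2 * r"
  then show "interlaced iv jv m < interlaced iv jv (Suc m)"
    using iv_less_jv jv_less_iv_Suc by (cases "odd m") (auto simp: interlaced_def elim!: oddE evenE)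
qed

lemma interlaced_cases:
  assumes "m \<in> {1..2*r}"
  obtains l where "l \<in> {1..r}" "m = 2 * l - 1" "odd m" "interlaced iv jv m = iv l"
    | l where "l \<in> {1..r}" "m = 2 * l" "even m" "interlaced iv jv m = jv l"
proof (cases "odd m")
  case True
  then show ?thesis
    using assms that(1)[of "(m + 1) div 2"] by (auto simp: interlaced_def elim!: oddE)
next
  case False
  then show ?thesis
    using assms that(2)[of "m div 2"] by (auto simp: interlaced_def elim!: evenE)
qed

lemma interlaced_image: "interlaced iv jv ` {1..2*r} = sym_diff I J"
proof
  show "interlaced iv jv ` {1..2*r} \<subseteq> sym_diff I J"
  proof
    fix u assume "u \<in> interlaced iv jv ` {1..2*r}"
    then obtain m where m: "m \<in> {1..2*r}" "u = interlaced iv jv m"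
      by blast
    from m(1) show "u \<in> sym_diff I J"
      by (cases rule: interlaced_cases) (auto simp: m(2) I_minus_J J_minus_I)
  qed
  have "iv l = interlaced iv jv (2 * l - 1)" "jv l = interlaced iv jv (2 * l)" if "l \<in> {1..r}" for l
    using that by (simp_all add: interlaced_def)
  then show "sym_diff I J \<subseteq> interlaced iv jv ` {1..2*r}"
    unfolding I_minus_J J_minus_I by force
qed

lemma interlaced_range: "interlaced iv jv m \<in> {1..n}" if "m \<in> {1..2*r}"
  using that by (cases rule: interlaced_cases) (use iv_less_jv in fastforce)+

lemma inj_on_iv: "inj_on iv {1..r}"
proof (rule inj_onI)
  fix x y assume x: "x \<in> {1..r}" and y: "y \<in> {1..r}" and "iv x = iv y"
  then have "interlaced iv jv (2 * x - 1) = interlaced iv jv (2 * y - 1)"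
    by (simp add: interlaced_def)
  moreover have "2 * x - 1 \<in> {1..2*r}" "2 * y - 1 \<in> {1..2*r}"
    using x y by auto
  ultimately show "x = y"
    using strict_mono_on_eq[OF interlaced_strict_mono] x y by fastforce
qed

lemma inj_on_jv: "inj_on jv {1..r}"
proof (rule inj_onI)
  fix x y assume x: "x \<in> {1..r}" and y: "y \<in> {1..r}" and "jv x = jv y"
  then have "interlaced iv jv (2 * x) = interlaced iv jv (2 * y)"
    by (simp add: interlaced_def)
  moreover have "2 * x \<in> {1..2*r}" "2 * y \<in> {1..2*r}"
    using x y by auto
  ultimately show "x = y"
    using strict_mono_on_eq[OF interlaced_strict_mono] by fastforce
qed

end

lemma MX_mult_MY: "MX I J r iv jv b v ** MY I J r iv jv b v = mat fps_X"
  and MY_mult_MX: "MY I J r iv jv b v ** MX I J r iv jv b v = mat fps_X"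
  unfolding MX_def MY_def Let_def
  by (simp_all add: mat_eq_mat2 mat2_mult algebra_simps)

context interlacing
begin

lemma MX_interlaced:
  assumes "m \<in> {1..2*r}"
  shows "MX I J r iv jv b (interlaced iv jv m)
    = (if odd m then mat2 fps_X (b m) 0 1 else mat2 1 (b m) 0 fps_X)"
  using assms
proof (cases rule: interlaced_cases)
  case (1 l)
  then have "\<exists>l'\<in>{1..r}. iv l = iv l'"
    by blast
  then show ?thesis
    using 1 The_inj_on_eq[OF inj_on_iv] by (simp add: MX_def)
next
  case (2 l)
  then have "\<exists>l'\<in>{1..r}. jv l = jv l'" and "\<not> (\<exists>l'\<in>{1..r}. jv l = iv l')"
    using I_minus_J J_minus_I by blast+
  then show ?thesis
    using 2 The_inj_on_eq[OF inj_on_jv] by (simp add: MX_def)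
qed

lemma MX_outside:
  assumes "u \<notin> interlaced iv jv ` {1..2*r}"
  shows "MX I J r iv jv b u = mat (if u \<in> J then 1 else fps_X)"
  using assms I_minus_J J_minus_I unfolding interlaced_image by (auto simp: MX_def)

lemma MX_nth_1_1: "MX I J r iv jv b u $ 1 $ 1 = (if u \<in> J then 1 else fps_X)"
proof (cases "u \<in> interlaced iv jv ` {1..2*r}")
  case True
  then obtain m where m: "m \<in> {1..2*r}" "u = interlaced iv jv m"
    by blast
  have "MX I J r iv jv b u = (if odd m then mat2 fps_X (b m) 0 1 else mat2 1 (b m) 0 fps_X)"
    using MX_interlaced[OF m(1)] m(2) by simp
  moreover from m(1) have "u \<in> J \<longleftrightarrow> even m"
    by (cases rule: interlaced_cases) (use m(2) I_minus_J J_minus_I in blast)+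
  ultimately show ?thesis
    by simp
next
  case False
  then show ?thesis
    by (simp add: MX_outside mat_def)
qed

lemma MX_loop:
  assumes "J \<subseteq> {1..n}" and "(\<Sum>m = 1..2*r. b m) = 0"
  shows "xpath n (MX I J r iv jv b) 0 n = mat (fps_X ^ (n - card J))"
proof -
  have "xpath n (MX I J r iv jv b) 0 n = mat (\<Prod>u = 1..n. MX I J r iv jv b u $ 1 $ 1)"
    using interlaced_range
    by (intro xpath_interlaced_loop[OF interlaced_strict_mono _ MX_interlaced MX_outside assms(2)])
      auto
  also have "(\<Prod>u = 1..n. MX I J r iv jv b u $ 1 $ 1) = fps_X ^ card ({1..n} - J)"
    by (simp add: MX_nth_1_1 prod_if_mem_eq_power)
  also have "card ({1..n} - J) = n - card J"
    using assms(1) by (simp add: card_Diff_subset finite_subset)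
  finally show ?thesis .
qed

end

theorem proposition3p1:
  fixes k n r :: nat and I J :: "nat set" and iv jv :: "nat \<Rightarrow> nat"
    and b :: "nat \<Rightarrow> complex fps"
  assumes "1 \<le> k" and "k \<le> n - 1"
    and "I \<subseteq> {1..n}" and "J \<subseteq> {1..n}" and "card I = k" and "card J = k"
    and "tightly_r_interlacing k r I J"
    and "I - J = iv ` {1..r}" and "J - I = jv ` {1..r}"
    and "\<forall>l\<in>{1..r}. 1 \<le> iv l \<and> iv l < jv l \<and> jv l \<le> n"
    and "\<forall>l\<in>{1..<r}. jv l < iv (Suc l)"
    and "(\<Sum>l=1..2*r. b l) = 0"
  shows "CM_rep k n (MX I J r iv jv b) (MY I J r iv jv b)"
proof -
  interpret interlacing n r I J iv jv
    using assms(8-11) by unfold_locales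
  have "k \<le> n"
    using assms(2) by simp
  have "xpath n (MX I J r iv jv b) 0 n = mat (fps_X ^ (n - k))"
    using MX_loop assms(4,6,12) by simp
  then have "xpath n (MX I J r iv jv b) i k = ypath n (MY I J r iv jv b) i (n - k)" for i
    by (rule xpath_eq_ypath[OF MX_mult_MY MY_mult_MX \<open>k \<le> n\<close>])
  then show ?thesis
    unfolding CM_rep_def by (simp add: MX_mult_MY MY_mult_MX)
qed

end
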